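(* Let $g$ be a generalized string over a finite alphabet $\Sigma$ and let $M_g=\mathrm{NFA}_\circlearrowleft(g)$. Then $\mathrm{SubsetConstruction}(M_g)$ is a minimal DFA.
   Context: For a finite alphabet $\Sigma$, the generalized alphabet is $\mathcal{G}_\Sigma=\mathcal{P}(\Sigma)\setminus\{\emptyset\}$; a generalized string $g=g[1]\cdots g[|g|]$ is a finite string over $\mathcal{G}_\Sigma$. $\mathrm{NFA}(g)=(Q,\Sigma,\Delta,Q_\alpha,F)$ with $Q=\{0,\dots,|g|\}$, $\Delta(q,\sigma)=\{q+1\}$ if $q<|g|$ and $\sigma\in g[q+1]$, and $\Delta(q,\sigma)=\emptyset$ otherwise; $Q_\alpha=\{0\}$, $F=\{|g|\}$. $\mathrm{NFA}_\circlearrowleft(g)=(Q,\Sigma,\Delta_\circlearrowleft,Q_\alpha,F)$ where $\Delta_\circlearrowleft(q,\sigma)=\{q\}\cup\Delta(q,\sigma)$ if $q\in Q_\alpha$ and $\Delta_\circlearrowleft(q,\sigma)=\Delta(q,\sigma)$ otherwise. For an NFA $(Q,\Sigma,\Delta,Q_\alpha,F)$, $\mathrm{SubsetConstruction}$ denotes the DFA whose states are the subsets $\hat\delta(Q_\alpha,s)\subseteq Q$, $s\in\Sigma^*$, with $\delta(Q',\sigma)=\bigcup_{q\in Q'}\Delta(q,\sigma)$ (extended to strings), start state $Q_\alpha$ and accepting states the subsets meeting $F$. A DFA is minimal if no DFA with fewer states recognizes the same language. *)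

theory Defs
  imports Main
begin

record ('q, 'a) nfa =
  nstates :: "'q set"
  ntrans  :: "'q \<Rightarrow> 'a \<Rightarrow> 'q set"
  ninit   :: "'q set"
  nfinal  :: "'q set"

record ('q, 'a) dfa =
  dstates :: "'q set"
  dtrans  :: "'q \<Rightarrow> 'a \<Rightarrow> 'q"
  dinit   :: "'q"
  dfinal  :: "'q set"

definition is_dfa :: "'a set \<Rightarrow> ('q, 'a) dfa \<Rightarrow> bool" where
  "is_dfa Sig M \<longleftrightarrow> finite (dstates M) \<and> dinit M \<in> dstates M \<and> dfinal M \<subseteq> dstates M
     \<and> (\<forall>q\<in>dstates M. \<forall>a\<in>Sig. dtrans M q a \<in> dstates M)"

definition dlang :: "'a set \<Rightarrow> ('q, 'a) dfa \<Rightarrow> 'a list set" where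
  "dlang Sig M = {w. set w \<subseteq> Sig \<and> foldl (dtrans M) (dinit M) w \<in> dfinal M}"

definition gen_string :: "'a set \<Rightarrow> 'a set list \<Rightarrow> bool" where
  "gen_string Sig g \<longleftrightarrow> (\<forall>x\<in>set g. x \<noteq> {} \<and> x \<subseteq> Sig)"

text \<open>NFA(g): states 0..|g|, transition q -sigma-> q+1 iff q < |g| and sigma in g[q+1]
  (1-indexed in the paper, i.e. g ! q here).\<close>
definition NFA_g :: "'a set list \<Rightarrow> (nat, 'a) nfa" where
  "NFA_g g = \<lparr> nstates = {0..length g},
               ntrans = (\<lambda>q \<sigma>. if q < length g \<and> \<sigma> \<in> g ! q then {Suc q} else {}),
               ninit = {0},
               nfinal = {length g} \<rparr>"

definition NFA_loop :: "'a set list \<Rightarrow> (nat, 'a) nfa" where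
  "NFA_loop g = (let N = NFA_g g in
     N \<lparr> ntrans := (\<lambda>q \<sigma>. (if q \<in> ninit N then {q} else {}) \<union> ntrans N q \<sigma>) \<rparr>)"

definition nset_trans :: "('q, 'a) nfa \<Rightarrow> 'q set \<Rightarrow> 'a \<Rightarrow> 'q set" where
  "nset_trans N Q a = (\<Union>q\<in>Q. ntrans N q a)"

definition subset_construction :: "'a set \<Rightarrow> ('q, 'a) nfa \<Rightarrow> ('q set, 'a) dfa" where
  "subset_construction Sig N =
     (let S = {foldl (nset_trans N) (ninit N) w | w. set w \<subseteq> Sig} in
      \<lparr> dstates = S,
        dtrans = nset_trans N,
        dinit = ninit N,
        dfinal = {Q \<in> S. Q \<inter> nfinal N \<noteq> {}} \<rparr>)"

text \<open>Minimality: no DFA recognizing the same language has fewer states. Competing DFAs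
  are taken with states of type nat (every finite DFA can be relabelled into nat).\<close>
definition minimal_dfa :: "'a set \<Rightarrow> ('q, 'a) dfa \<Rightarrow> bool" where
  "minimal_dfa Sig M \<longleftrightarrow> is_dfa Sig M \<and>
     (\<forall>M' :: (nat, 'a) dfa. is_dfa Sig M' \<and> dlang Sig M' = dlang Sig M
        \<longrightarrow> card (dstates M) \<le> card (dstates M'))"

end

theory Submission
  imports Defs
begin

(* A DFA all of whose states are reachable and pairwise
   distinguishable is minimal: a competing DFA for the same language must send
   the access words of two different states to different states (otherwise a
   distinguishing suffix would be accepted after one and rejected after the
   other), so it has at least as many states.  The subset construction
   produces a DFA whose states are reachable by definition.  For the looped NFA
   of a generalized string g of length n, every reachable set contains 0 and
   lies in {0..n}; a state q with 0 < q <= n reaches the final state n in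
   exactly n - q steps along a word spelling g[q+1..n], and no other state
   does, so such a word tests membership of q.  Hence two different reachable
   sets are separated by the word belonging to any element of their symmetric
   difference (that element is non-zero), and the theorem follows.  The
   argument does not use finiteness of the alphabet. *)

section \<open>A sufficient criterion for minimality of a DFA\<close>

definition dreachable :: "'a set \<Rightarrow> ('q, 'a) dfa \<Rightarrow> 'q \<Rightarrow> bool" where
  "dreachable Sig M q \<longleftrightarrow> (\<exists>w. set w \<subseteq> Sig \<and> foldl (dtrans M) (dinit M) w = q)"

definition distinguishable :: "'a set \<Rightarrow> ('q, 'a) dfa \<Rightarrow> 'q \<Rightarrow> 'q \<Rightarrow> bool" where
  "distinguishable Sig M p q \<longleftrightarrow>
     (\<exists>v. set v \<subseteq> Sig \<and> (foldl (dtrans M) p v \<in> dfinal M) \<noteq> (foldl (dtrans M) q v \<in> dfinal M))"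

lemma dfa_run_in:
  "is_dfa Sig M \<Longrightarrow> q \<in> dstates M \<Longrightarrow> set w \<subseteq> Sig \<Longrightarrow> foldl (dtrans M) q w \<in> dstates M"
  by (induction w arbitrary: q) (auto simp: is_dfa_def)

lemma dlang_append:
  "set w \<subseteq> Sig \<Longrightarrow> set v \<subseteq> Sig \<Longrightarrow>
   w @ v \<in> dlang Sig M \<longleftrightarrow> foldl (dtrans M) (foldl (dtrans M) (dinit M) w) v \<in> dfinal M"
  by (simp add: dlang_def)

(* Myhill-Nerode lower bound: access words of distinct states of M lead to
   distinct states of any DFA with the same language. *)
lemma minimal_if_reachable_distinguishable:
  assumes dfa: "is_dfa Sig M"
    and reach: "\<forall>q\<in>dstates M. dreachable Sig M q"
    and dist: "\<forall>p\<in>dstates M. \<forall>q\<in>dstates M. p \<noteq> q \<longrightarrow> distinguishable Sig M p q"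
  shows "minimal_dfa Sig M"
  unfolding minimal_dfa_def
proof (intro conjI allI impI, rule dfa)
  fix M' :: "(nat, 'a) dfa"
  assume "is_dfa Sig M' \<and> dlang Sig M' = dlang Sig M"
  then have dfa': "is_dfa Sig M'" and lang: "dlang Sig M' = dlang Sig M" by auto
  define acc where "acc q = (SOME w. set w \<subseteq> Sig \<and> foldl (dtrans M) (dinit M) w = q)" for q
  have acc: "set (acc q) \<subseteq> Sig \<and> foldl (dtrans M) (dinit M) (acc q) = q" if "q \<in> dstates M" for q
    unfolding acc_def by (rule someI_ex) (use reach that in \<open>auto simp: dreachable_def\<close>)
  define f where "f q = foldl (dtrans M') (dinit M') (acc q)" for q
  have image: "f ` dstates M \<subseteq> dstates M'"
    using dfa' acc dfa_run_in[OF dfa'] by (auto simp: f_def is_dfa_def)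
  have "inj_on f (dstates M)"
  proof (rule inj_onI, rule ccontr)
    fix p q assume p: "p \<in> dstates M" and q: "q \<in> dstates M" and same: "f p = f q" and "p \<noteq> q"
    then have "distinguishable Sig M p q" using dist by blast
    then obtain v where v: "set v \<subseteq> Sig"
      and differ: "(foldl (dtrans M) p v \<in> dfinal M) \<noteq> (foldl (dtrans M) q v \<in> dfinal M)"
      unfolding distinguishable_def by blast
    have "acc p @ v \<in> dlang Sig M' \<longleftrightarrow> acc q @ v \<in> dlang Sig M'"
      using same acc[OF p] acc[OF q] v by (simp add: dlang_append f_def)
    then show False
      using differ acc[OF p] acc[OF q] v by (simp add: lang dlang_append)
  qed
  then show "card (dstates M) \<le> card (dstates M')"
    using card_inj_on_le[OF _ image] dfa' by (simp add: is_dfa_def)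
qed

section \<open>The subset construction\<close>

lemma subset_construction_simps:
  "dstates (subset_construction Sig N) = {foldl (nset_trans N) (ninit N) w | w. set w \<subseteq> Sig}"
  "dtrans (subset_construction Sig N) = nset_trans N"
  "dinit (subset_construction Sig N) = ninit N"
  "dfinal (subset_construction Sig N) = {Q \<in> dstates (subset_construction Sig N). Q \<inter> nfinal N \<noteq> {}}"
  by (simp_all add: subset_construction_def Let_def)

lemma nset_run_closed:
  assumes "\<forall>q\<in>nstates N. \<forall>a\<in>Sig. ntrans N q a \<subseteq> nstates N"
  shows "Q \<subseteq> nstates N \<Longrightarrow> set w \<subseteq> Sig \<Longrightarrow> foldl (nset_trans N) Q w \<subseteq> nstates N"
proof (induction w arbitrary: Q)
  case (Cons a w)
  have "nset_trans N Q a \<subseteq> nstates N"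
    using Cons.prems assms unfolding nset_trans_def by auto
  then show ?case using Cons by simp
qed simp

lemma subset_construction_run_in:
  assumes "Q \<in> dstates (subset_construction Sig N)" and "set v \<subseteq> Sig"
  shows "foldl (nset_trans N) Q v \<in> dstates (subset_construction Sig N)"
proof -
  obtain w where "set w \<subseteq> Sig" "Q = foldl (nset_trans N) (ninit N) w"
    using assms(1) by (auto simp: subset_construction_simps)
  then show ?thesis
    using assms(2) by (auto simp: subset_construction_simps intro!: exI[of _ "w @ v"])
qed

lemma subset_construction_is_dfa:
  assumes "finite (nstates N)" and "ninit N \<subseteq> nstates N"
    and closed: "\<forall>q\<in>nstates N. \<forall>a\<in>Sig. ntrans N q a \<subseteq> nstates N"
  shows "is_dfa Sig (subset_construction Sig N)"
proof -
  let ?S = "dstates (subset_construction Sig N)"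
  have "?S \<subseteq> Pow (nstates N)"
    using nset_run_closed[OF closed assms(2)] by (auto simp: subset_construction_simps)
  then have "finite ?S" using assms(1) by (simp add: finite_subset)
  moreover have "ninit N \<in> ?S"
    by (auto simp: subset_construction_simps intro!: exI[of _ "[]"])
  moreover have "nset_trans N Q a \<in> ?S" if "Q \<in> ?S" "a \<in> Sig" for Q a
    using subset_construction_run_in[OF that(1), of "[a]"] that(2) by simp
  ultimately show ?thesis
    by (auto simp: is_dfa_def subset_construction_simps)
qed

lemma subset_construction_reachable:
  "Q \<in> dstates (subset_construction Sig N) \<Longrightarrow> dreachable Sig (subset_construction Sig N) Q"
  by (auto simp: dreachable_def subset_construction_simps)

lemma subset_construction_distinguishable:
  assumes "S \<in> dstates (subset_construction Sig N)" and "T \<in> dstates (subset_construction Sig N)"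
    and "set v \<subseteq> Sig"
    and "(foldl (nset_trans N) S v \<inter> nfinal N \<noteq> {}) \<noteq> (foldl (nset_trans N) T v \<inter> nfinal N \<noteq> {})"
  shows "distinguishable Sig (subset_construction Sig N) S T"
  unfolding distinguishable_def
  using assms subset_construction_run_in[OF assms(1) assms(3)]
    subset_construction_run_in[OF assms(2) assms(3)]
  by (intro exI[of _ v]) (auto simp: subset_construction_simps)

section \<open>Runs of the looped NFA of a generalized string\<close>

lemma NFA_loop_simps:
  "nstates (NFA_loop g) = {0..length g}"
  "ninit (NFA_loop g) = {0}"
  "nfinal (NFA_loop g) = {length g}"
  "ntrans (NFA_loop g) q a =
     (if q = 0 then {0} else {}) \<union> (if q < length g \<and> a \<in> g ! q then {Suc q} else {})"
  by (simp_all add: NFA_loop_def NFA_g_def Let_def)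

lemma NFA_loop_trans_closed:
  "\<forall>q\<in>nstates (NFA_loop g). \<forall>a\<in>A. ntrans (NFA_loop g) q a \<subseteq> nstates (NFA_loop g)"
  by (auto simp: NFA_loop_simps Suc_le_eq)

(* Every state reached after reading v comes either from 0 (which may idle in
   its loop) or from a non-zero state p, and then it is exactly p + |v|. *)
lemma NFA_loop_run_origin:
  "x \<in> foldl (nset_trans (NFA_loop g)) Q v \<Longrightarrow>
   \<exists>p\<in>Q. x \<le> p + length v \<and> (p \<noteq> 0 \<longrightarrow> x = p + length v)"
proof (induction v arbitrary: Q)
  case (Cons a v)
  from Cons.IH[of "nset_trans (NFA_loop g) Q a"] Cons.prems
  obtain p' where p': "p' \<in> nset_trans (NFA_loop g) Q a" "x \<le> p' + length v"
    "p' \<noteq> 0 \<longrightarrow> x = p' + length v" by auto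
  then obtain p where "p \<in> Q" "p' \<in> ntrans (NFA_loop g) p a" by (auto simp: nset_trans_def)
  with p' show ?case
    by (intro bexI[of _ p]) (auto simp: NFA_loop_simps split: if_splits)
qed auto

lemma NFA_loop_run_keeps_zero:
  "0 \<in> Q \<Longrightarrow> 0 \<in> foldl (nset_trans (NFA_loop g)) Q v"
proof (induction v arbitrary: Q)
  case (Cons a v)
  then have "0 \<in> nset_trans (NFA_loop g) Q a" by (auto simp: nset_trans_def NFA_loop_simps)
  then show ?case using Cons.IH by simp
qed simp

lemma NFA_loop_reads_factor:
  "q \<in> Q \<Longrightarrow> q + length v \<le> length g \<Longrightarrow> (\<forall>i<length v. v ! i \<in> g ! (q + i)) \<Longrightarrow>
   q + length v \<in> foldl (nset_trans (NFA_loop g)) Q v"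
proof (induction v arbitrary: q Q)
  case (Cons a v)
  have "Suc q \<in> nset_trans (NFA_loop g) Q a"
    using Cons.prems(1,2) Cons.prems(3)[rule_format, of 0]
    by (auto simp: nset_trans_def NFA_loop_simps intro!: bexI[of _ q])
  moreover have "\<forall>i<length v. v ! i \<in> g ! (Suc q + i)"
    using Cons.prems(3) by (metis Suc_less_eq add_Suc_shift length_Cons nth_Cons_Suc)
  ultimately show ?case
    using Cons.IH[of "Suc q"] Cons.prems(2) by simp
qed simp

definition spell :: "'a set list \<Rightarrow> 'a list" where
  "spell g = map (\<lambda>X. SOME x. x \<in> X) g"

lemma length_spell [simp]: "length (spell g) = length g"
  by (simp add: spell_def)

lemma spell_letters:
  assumes "gen_string Sig g" and "i < length g"
  shows "spell g ! i \<in> g ! i" and "spell g ! i \<in> Sig"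
proof -
  have "g ! i \<noteq> {}" and sub: "g ! i \<subseteq> Sig"
    using assms nth_mem[OF assms(2)] by (auto simp: gen_string_def)
  moreover have "spell g ! i = (SOME x. x \<in> g ! i)"
    using assms(2) by (simp add: spell_def)
  ultimately show "spell g ! i \<in> g ! i"
    by (simp add: some_in_eq)
  then show "spell g ! i \<in> Sig"
    using sub by blast
qed

lemma spell_over_alphabet: "gen_string Sig g \<Longrightarrow> set (spell g) \<subseteq> Sig"
  by (metis in_set_conv_nth length_spell spell_letters(2) subsetI)

lemma NFA_loop_separating_word:
  assumes "gen_string Sig g" and "0 < q" and "q \<le> length g"
  shows "length g \<in> foldl (nset_trans (NFA_loop g)) Q (drop q (spell g)) \<longleftrightarrow> q \<in> Q"
proof
  assume "length g \<in> foldl (nset_trans (NFA_loop g)) Q (drop q (spell g))"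
  then obtain p where "p \<in> Q" and bound: "length g \<le> p + (length g - q)"
    and exact: "p \<noteq> 0 \<longrightarrow> length g = p + (length g - q)"
    using NFA_loop_run_origin[of "length g" g Q "drop q (spell g)"] by auto
  have "p \<noteq> 0"
    using bound assms(2,3) by (intro notI) simp
  then have "p = q"
    using exact assms(3) by arith
  with \<open>p \<in> Q\<close> show "q \<in> Q" by simp
next
  assume "q \<in> Q"
  moreover have "\<forall>i<length (drop q (spell g)). drop q (spell g) ! i \<in> g ! (q + i)"
    using spell_letters(1)[OF assms(1)] by simp
  ultimately show "length g \<in> foldl (nset_trans (NFA_loop g)) Q (drop q (spell g))"
    using NFA_loop_reads_factor[of q Q "drop q (spell g)" g] assms(3) by simp
qed

section \<open>Distinguishability of the subset states of the looped NFA\<close>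

lemma NFA_loop_subset_states:
  assumes "S \<in> dstates (subset_construction Sig (NFA_loop g))"
  shows "0 \<in> S" and "S \<subseteq> {0..length g}"
proof -
  obtain w where S: "S = foldl (nset_trans (NFA_loop g)) {0} w"
    using assms by (auto simp: subset_construction_simps NFA_loop_simps)
  then show "0 \<in> S"
    by (simp add: NFA_loop_run_keeps_zero)
  have "foldl (nset_trans (NFA_loop g)) {0} w \<subseteq> nstates (NFA_loop g)"
    using nset_run_closed[OF NFA_loop_trans_closed[where A = UNIV], where Q = "{0}" and w = w]
    by (simp add: NFA_loop_simps)
  then show "S \<subseteq> {0..length g}"
    using S by (simp add: NFA_loop_simps)
qed

(* Distinct subset states differ in some non-zero NFA state q, and the spelling
   of g from position q separates them. *)
lemma NFA_loop_subset_states_distinguishable: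
  assumes g: "gen_string Sig g"
    and S: "S \<in> dstates (subset_construction Sig (NFA_loop g))"
    and T: "T \<in> dstates (subset_construction Sig (NFA_loop g))"
    and "S \<noteq> T"
  shows "distinguishable Sig (subset_construction Sig (NFA_loop g)) S T"
proof -
  obtain q where q: "(q \<in> S) \<noteq> (q \<in> T)" using \<open>S \<noteq> T\<close> by blast
  have q_pos: "0 < q"
    using q NFA_loop_subset_states(1)[OF S] NFA_loop_subset_states(1)[OF T] by (cases "q = 0") auto
  have q_le: "q \<le> length g"
    using q NFA_loop_subset_states(2)[OF S] NFA_loop_subset_states(2)[OF T] by (cases "q \<in> S") auto
  have "(length g \<in> foldl (nset_trans (NFA_loop g)) S (drop q (spell g))) \<noteq>
        (length g \<in> foldl (nset_trans (NFA_loop g)) T (drop q (spell g)))"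
    unfolding NFA_loop_separating_word[OF g q_pos q_le] by (rule q)
  moreover have "set (drop q (spell g)) \<subseteq> Sig"
    by (rule order_trans[OF set_drop_subset spell_over_alphabet[OF g]])
  ultimately show ?thesis
    using subset_construction_distinguishable[OF S T] by (simp add: NFA_loop_simps)
qed

theorem mainTheorem4:
  fixes Sig :: "'a set" and g :: "'a set list"
  assumes "finite Sig"
    and "gen_string Sig g"
  shows "minimal_dfa Sig (subset_construction Sig (NFA_loop g))"
proof (rule minimal_if_reachable_distinguishable)
  show "is_dfa Sig (subset_construction Sig (NFA_loop g))"
    by (rule subset_construction_is_dfa[OF _ _ NFA_loop_trans_closed]) (simp_all add: NFA_loop_simps)
  show "\<forall>Q\<in>dstates (subset_construction Sig (NFA_loop g)).
          dreachable Sig (subset_construction Sig (NFA_loop g)) Q"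
    using subset_construction_reachable by blast
  show "\<forall>S\<in>dstates (subset_construction Sig (NFA_loop g)).
        \<forall>T\<in>dstates (subset_construction Sig (NFA_loop g)).
          S \<noteq> T \<longrightarrow> distinguishable Sig (subset_construction Sig (NFA_loop g)) S T"
    using NFA_loop_subset_states_distinguishable[OF assms(2)] by blast
qed

end
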